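(* Let $D$ be the contamination divergence and $\eta\in(0,1)$. Suppose the cumulative distribution function $F$ of the reference belief $P$ is absolutely continuous with density $f>0$ on $\Theta$, and that $\theta\mapsto\theta-\frac{1-F(\theta)}{f(\theta)}$ is strictly increasing. Let $r^*:=\sup\{\theta:\theta-\frac{1-F(\theta)}{f(\theta)}\le0\}$ and define $x^*_i(\theta,\theta')=1$ if $\theta>\theta'$ and $\theta\ge r^*$; $=1/2$ if $\theta=\theta'$ and $\theta\ge r^*$; $=0$ otherwise. Then $x^*$ solves the Optimal Allocation Problem (A): $$\sup_x\Big\{\sum_{i=1}^2\int_\Theta\Big[\theta X_i(\theta)-\int_{\underline\theta}^{\theta}X_i(z)\,dz\Big]dP(\theta):\ x\text{ is an allocation rule satisfying Assumption X}\Big\}.$$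
   Context: $\Theta=[\underline\theta,\bar\theta]$ with $0<\underline\theta<\bar\theta$, Borel $\sigma$-algebra $\mathcal{B}$; $P\in\Delta(\Theta,\mathcal{B})$ is atomless; $\Delta(\Theta,\mathcal{B})$ denotes the probability measures on $(\Theta,\mathcal{B})$. The contamination divergence: $D(Q\|P)=\operatorname{ess\,sup}_P(1-\frac{dQ}{dP})$ if $Q\ll P$, and $+\infty$ otherwise. Two bidders $i\in\{1,2\}$. An allocation rule is a bounded measurable $x=(x_1,x_2):\Theta^2\to\mathbb{R}^2$ with $x_1(\theta,\theta')\ge0$, $x_2(\theta',\theta)\ge0$, $x_1(\theta,\theta')+x_2(\theta',\theta)\le1$ for all $\theta,\theta'$. $X_i(\theta)=\int x_i(\theta,\theta')dP(\theta')$ and $X_i^{\min}(\theta)=\inf\{\int x_i(\theta,\theta')dQ(\theta'):Q\in\Delta(\Theta,\mathcal{B}),D(Q\|P)\le\eta\}$. Assumption X: (i) $x_i(\theta,\theta')\in\{0,1\}$ for $\theta'\ne\theta$; (ii) $X_i(\theta)=1$ implies $\theta=\bar\theta$; (iii) $X_i^{\min}$ is non-decreasing. *)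

theory Defs
  imports "HOL-Probability.Probability"
begin

text \<open>Type space Theta = [a, b]; the reference belief P is a probability measure
  on the Borel sets of [a, b]. Bidders are indexed by 1 and 2; an allocation rule is
  x :: nat => real => real => real, where x i t t' is bidder i's allocation when
  bidder i has type t and the opponent has type t'.\<close>

definition atomless :: "'a measure \<Rightarrow> bool" where
  "atomless M \<longleftrightarrow> (\<forall>A\<in>sets M. 0 < measure M A \<longrightarrow>
      (\<exists>B\<in>sets M. B \<subseteq> A \<and> 0 < measure M B \<and> measure M B < measure M A))"

definition contamination_div :: "'a measure \<Rightarrow> 'a measure \<Rightarrow> ereal" where
  "contamination_div Q P =
     (if absolutely_continuous P Q
      then esssup P (\<lambda>t. ereal 1 - enn2ereal (RN_deriv P Q t))
      else \<infinity>)"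

definition allocation_rule :: "real \<Rightarrow> real \<Rightarrow> (nat \<Rightarrow> real \<Rightarrow> real \<Rightarrow> real) \<Rightarrow> bool" where
  "allocation_rule a b x \<longleftrightarrow>
     (\<forall>i\<in>{1,2::nat}.
        (\<lambda>(t, t'). x i t t') \<in> borel_measurable
            (restrict_space borel {a..b} \<Otimes>\<^sub>M restrict_space borel {a..b})
      \<and> (\<exists>B. \<forall>t\<in>{a..b}. \<forall>t'\<in>{a..b}. \<bar>x i t t'\<bar> \<le> B))
   \<and> (\<forall>t\<in>{a..b}. \<forall>t'\<in>{a..b}.
        0 \<le> x 1 t t' \<and> 0 \<le> x 2 t' t \<and> x 1 t t' + x 2 t' t \<le> 1)"

definition interim :: "real measure \<Rightarrow> (nat \<Rightarrow> real \<Rightarrow> real \<Rightarrow> real) \<Rightarrow> nat \<Rightarrow> real \<Rightarrow> real" where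
  "interim P x i t = (\<integral>t'. x i t t' \<partial>P)"

definition interim_min :: "real measure \<Rightarrow> real \<Rightarrow> (nat \<Rightarrow> real \<Rightarrow> real \<Rightarrow> real) \<Rightarrow> nat \<Rightarrow> real \<Rightarrow> real" where
  "interim_min P \<eta> x i t =
     Inf {(\<integral>t'. x i t t' \<partial>Q) | Q. sets Q = sets P \<and> prob_space Q
                                  \<and> contamination_div Q P \<le> ereal \<eta>}"

definition assumption_X :: "real \<Rightarrow> real \<Rightarrow> real measure \<Rightarrow> real \<Rightarrow> (nat \<Rightarrow> real \<Rightarrow> real \<Rightarrow> real) \<Rightarrow> bool" where
  "assumption_X a b P \<eta> x \<longleftrightarrow>
     (\<forall>i\<in>{1,2::nat}.
        (\<forall>t\<in>{a..b}. \<forall>t'\<in>{a..b}. t' \<noteq> t \<longrightarrow> x i t t' \<in> {0, 1})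
      \<and> (\<forall>t\<in>{a..b}. interim P x i t = 1 \<longrightarrow> t = b)
      \<and> mono_on {a..b} (interim_min P \<eta> x i))"

definition revenue :: "real \<Rightarrow> real measure \<Rightarrow> (nat \<Rightarrow> real \<Rightarrow> real \<Rightarrow> real) \<Rightarrow> real" where
  "revenue a P x =
     (\<Sum>i\<in>{1,2::nat}. \<integral>t. (t * interim P x i t
                              - (LINT z:{a..t}|lborel. interim P x i z)) \<partial>P)"

definition virtual_value :: "(real \<Rightarrow> real) \<Rightarrow> (real \<Rightarrow> real) \<Rightarrow> real \<Rightarrow> real" where
  "virtual_value F f t = t - (1 - F t) / f t"

text \<open>r* = sup {t in Theta : virtual value <= 0}; the point a is added so that
  the empty set yields r* = a (equivalent to the convention sup {} = -infinity here).\<close>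
definition reserve :: "real \<Rightarrow> real \<Rightarrow> (real \<Rightarrow> real) \<Rightarrow> (real \<Rightarrow> real) \<Rightarrow> real" where
  "reserve a b F f = Sup ({a} \<union> {t\<in>{a..b}. virtual_value F f t \<le> 0})"

definition x_star :: "real \<Rightarrow> nat \<Rightarrow> real \<Rightarrow> real \<Rightarrow> real" where
  "x_star r i t t' =
     (if t > t' \<and> t \<ge> r then 1 else if t = t' \<and> t \<ge> r then 1/2 else 0)"

end

theory Submission
  imports Defs
begin

text \<open>Myerson's argument. By Fubini, the expected payment of a bidder with interim allocation X,
  \<open>\<integral> (\<theta> X(\<theta>) - \<integral>\<^sub>a\<^sup>\<theta> X) dP\<close>, equals \<open>\<integral> X \<phi> dP\<close> for the virtual value
  \<open>\<phi>(\<theta>) = \<theta> - (1 - F(\<theta>)) / f(\<theta>)\<close>. Hence the revenue of an allocation rule x is the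
  \<open>P \<otimes> P\<close>-integral of \<open>x\<^sub>1(\<theta>,\<theta>') \<phi>(\<theta>) + x\<^sub>2(\<theta>',\<theta>) \<phi>(\<theta>')\<close>, which is pointwise at most
  \<open>max 0 (max (\<phi> \<theta>) (\<phi> \<theta>'))\<close> because \<open>x\<^sub>1 + x\<^sub>2 \<le> 1\<close>. Since \<open>\<phi>\<close> is strictly increasing
  and changes sign at the reserve r*, the rule x* attains this bound off ties and off
  \<open>{\<theta> = r*}\<close>, which are null because P is atomless. The bound holds for every allocation
  rule, so Assumption X is only needed to check that x* itself is admissible.\<close>

lemma atomless_measure_singleton:
  assumes "atomless M"
  shows "measure M {x} = 0"
proof (rule ccontr)
  assume "measure M {x} \<noteq> 0"
  then have "{x} \<in> sets M" and "0 < measure M {x}"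
    using measure_notin_sets[of "{x}" M] measure_nonneg[of M "{x}"] by (auto simp: less_le)
  then obtain B where "B \<subseteq> {x}" "0 < measure M B" "measure M B < measure M {x}"
    using assms unfolding atomless_def by blast
  then show False
    by (cases "B = {}") (auto dest: subset_singletonD)
qed

lemma not_null_sets_density:
  assumes [measurable]: "g \<in> borel_measurable M" "A \<in> sets M"
    and "A \<notin> null_sets M" "\<forall>x\<in>A. 0 < g x"
  shows "A \<notin> null_sets (density M g)"
proof
  assume "A \<in> null_sets (density M g)"
  then have "AE x in M. x \<in> A \<longrightarrow> g x = 0"
    by (simp add: null_sets_density_iff)
  then have "AE x in M. x \<notin> A"
    by (rule AE_mp) (use assms(4) in \<open>auto intro!: AE_I2\<close>)
  then show False
    using assms(3) AE_iff_null_sets[of A M] by simp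
qed

lemma integral_bounded_kernel:
  fixes k :: "'a \<Rightarrow> 'b \<Rightarrow> real"
  assumes "prob_space N"
    and [measurable]: "case_prod k \<in> borel_measurable (M \<Otimes>\<^sub>M N)"
    and bound: "\<forall>t\<in>space M. \<forall>s\<in>space N. \<bar>k t s\<bar> \<le> B"
  shows "(\<lambda>t. \<integral>s. k t s \<partial>N) \<in> borel_measurable M"
    and "\<forall>t\<in>space M. \<bar>\<integral>s. k t s \<partial>N\<bar> \<le> B"
proof -
  interpret N: prob_space N by fact
  show "(\<lambda>t. \<integral>s. k t s \<partial>N) \<in> borel_measurable M"
    by (rule N.borel_measurable_lebesgue_integral) simp
  show "\<forall>t\<in>space M. \<bar>\<integral>s. k t s \<partial>N\<bar> \<le> B"
  proof
    fix t assume t: "t \<in> space M"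
    have "integrable N (k t)"
      using bound t by (intro N.integrable_const_bound[where B=B]) auto
    moreover have "AE s in N. k t s \<le> B" "AE s in N. -B \<le> k t s"
      using bound t by (force intro!: AE_I2 simp: abs_le_iff)+
    ultimately have "(\<integral>s. k t s \<partial>N) \<le> B" "-B \<le> (\<integral>s. k t s \<partial>N)"
      by (simp_all add: N.integral_le_const N.integral_ge_const)
    then show "\<bar>\<integral>s. k t s \<partial>N\<bar> \<le> B"
      by linarith
  qed
qed

lemma (in prob_space) integral_kernel_times:
  fixes k :: "'a \<Rightarrow> 'b \<Rightarrow> real" and h :: "'a \<Rightarrow> real"
  assumes "prob_space N"
    and [measurable]: "case_prod k \<in> borel_measurable (M \<Otimes>\<^sub>M N)"
    and bound: "\<forall>t\<in>space M. \<forall>s\<in>space N. \<bar>k t s\<bar> \<le> B"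
    and h: "integrable M h"
  shows "integrable (M \<Otimes>\<^sub>M N) (\<lambda>(t, s). k t s * h t)"
    and "(\<integral>t. (\<integral>s. k t s \<partial>N) * h t \<partial>M) = (\<integral>(t, s). k t s * h t \<partial>(M \<Otimes>\<^sub>M N))"
proof -
  interpret N: prob_space N by fact
  interpret MN: pair_prob_space M N ..
  have [measurable]: "h \<in> borel_measurable M"
    using h by (rule borel_measurable_integrable)
  have bound': "\<bar>k t s\<bar> \<le> \<bar>B\<bar>" if "t \<in> space M" "s \<in> space N" for t s
    using bound that by fastforce
  show int: "integrable (M \<Otimes>\<^sub>M N) (\<lambda>(t, s). k t s * h t)"
  proof (rule Bochner_Integration.integrable_bound)
    show "integrable (M \<Otimes>\<^sub>M N) (\<lambda>(t, s). \<bar>B\<bar> * \<bar>h t\<bar>)"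
      using h by (intro MN.Fubini_integrable) (auto simp: split_beta')
    show "AE w in M \<Otimes>\<^sub>M N.
        norm ((\<lambda>(t, s). k t s * h t) w) \<le> norm ((\<lambda>(t, s). \<bar>B\<bar> * \<bar>h t\<bar>) w)"
      by (intro AE_I2) (auto simp: space_pair_measure abs_mult intro!: mult_right_mono bound')
  qed simp
  have "(\<integral>t. (\<integral>s. k t s \<partial>N) * h t \<partial>M) = (\<integral>t. \<integral>s. k t s * h t \<partial>N \<partial>M)"
    by simp
  also have "\<dots> = (\<integral>(t, s). k t s * h t \<partial>(M \<Otimes>\<^sub>M N))"
    using MN.integral_fst'[OF int] by simp
  finally show "(\<integral>t. (\<integral>s. k t s \<partial>N) * h t \<partial>M) = (\<integral>(t, s). k t s * h t \<partial>(M \<Otimes>\<^sub>M N))" .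
qed

lemma convex_combination_le_max:
  fixes p q u v :: real
  assumes "0 \<le> p" "0 \<le> q" "p + q \<le> 1"
  shows "p * u + q * v \<le> max 0 (max u v)"
proof -
  define m where "m = max 0 (max u v)"
  have "p * u + q * v \<le> p * m + q * m"
    using assms by (intro add_mono mult_left_mono) (auto simp: m_def)
  also have "\<dots> \<le> m"
    using assms mult_right_mono[of "p + q" 1 m] by (simp add: m_def algebra_simps)
  finally show ?thesis unfolding m_def .
qed

lemma interim_min_mono:
  assumes [measurable]: "x i t \<in> borel_measurable P" "x i t' \<in> borel_measurable P"
    and le: "\<forall>s\<in>space P. 0 \<le> x i t s \<and> x i t s \<le> x i t' s \<and> x i t' s \<le> B"
  shows "interim_min P \<eta> x i t \<le> interim_min P \<eta> x i t'"
proof -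
  define feasible where "feasible Q \<longleftrightarrow>
    sets Q = sets P \<and> prob_space Q \<and> contamination_div Q P \<le> ereal \<eta>" for Q
  have integral_le: "(\<integral>s. x i t s \<partial>Q) \<le> (\<integral>s. x i t' s \<partial>Q)" if "feasible Q" for Q
  proof -
    interpret Q: prob_space Q
      using that by (simp add: feasible_def)
    have [measurable_cong]: "sets Q = sets P" and space_Q: "space Q = space P"
      using that sets_eq_imp_space_eq by (auto simp: feasible_def)
    have "\<forall>s\<in>space Q. \<bar>x i t s\<bar> \<le> B \<and> \<bar>x i t' s\<bar> \<le> B"
      using le by (force simp: space_Q)
    then have "integrable Q (x i t)" "integrable Q (x i t')"
      by (auto intro!: Q.integrable_const_bound[where B=B] AE_I2)
    then show ?thesis
      using le by (intro integral_mono) (auto simp: space_Q)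
  qed
  have integral_nonneg: "0 \<le> (\<integral>s. x i t s \<partial>Q)" if "feasible Q" for Q
    using le that sets_eq_imp_space_eq[of Q P] by (auto simp: feasible_def intro!: Bochner_Integration.integral_nonneg)
  show ?thesis
  proof (cases "\<exists>Q. feasible Q")
    case True
    then show ?thesis
      unfolding interim_min_def feasible_def[symmetric]
      by (intro cInf_mono) (auto intro!: bdd_belowI[of _ 0] integral_nonneg integral_le)
  next
    case False
    then show ?thesis
      unfolding interim_min_def feasible_def[symmetric] by simp
  qed
qed

lemma virtual_value_pos_above_reserve:
  assumes "t \<in> {a..b}" "reserve a b F f < t"
  shows "0 < virtual_value F f t"
proof (rule ccontr)
  assume "\<not> 0 < virtual_value F f t"
  then have "t \<le> reserve a b F f"
    using assms(1) unfolding reserve_def by (intro cSup_upper bdd_aboveI[of _ b]) auto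
  then show False
    using assms(2) by simp
qed

lemma virtual_value_neg_below_reserve:
  assumes "strict_mono_on {a..b} (virtual_value F f)" "t \<in> {a..b}" "t < reserve a b F f"
  shows "virtual_value F f t < 0"
proof -
  define A where "A = {a} \<union> {u\<in>{a..b}. virtual_value F f u \<le> 0}"
  have "A \<noteq> {}" "bdd_above A"
    by (auto simp: A_def intro!: bdd_aboveI[of _ "max a b"])
  moreover have "t < Sup A"
    using assms(3) unfolding reserve_def A_def .
  ultimately obtain u where "u \<in> A" "t < u"
    using less_cSup_iff[of A t] by blast
  then have "u \<in> {a..b}" "virtual_value F f u \<le> 0"
    using assms(2) by (auto simp: A_def)
  moreover have "virtual_value F f t < virtual_value F f u"
    using assms(1,2) \<open>u \<in> {a..b}\<close> \<open>t < u\<close> by (auto simp: strict_mono_on_def)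
  ultimately show ?thesis
    by simp
qed

lemma allocation_rule_x_star: "allocation_rule a b (x_star r)"
proof -
  have "fst \<in> borel_measurable (restrict_space borel {a..b} \<Otimes>\<^sub>M restrict_space borel {a..b})"
    "snd \<in> borel_measurable (restrict_space borel {a..b} \<Otimes>\<^sub>M restrict_space borel {a..b})"
    by (auto intro!: measurable_restrict_space1 measurable_compose[OF measurable_fst] measurable_compose[OF measurable_snd])
  then have "(\<lambda>(t, t'). x_star r i t t')
      \<in> borel_measurable (restrict_space borel {a..b} \<Otimes>\<^sub>M restrict_space borel {a..b})" for i
    unfolding x_star_def split_beta' by measurable
  moreover have "\<bar>x_star r i t t'\<bar> \<le> 1" "0 \<le> x_star r i t t'" for i t t'
    by (simp_all add: x_star_def)
  moreover have "x_star r 1 t t' + x_star r 2 t' t \<le> 1" for t t'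
    by (simp add: x_star_def)
  ultimately show ?thesis
    unfolding allocation_rule_def by blast
qed

lemma x_star_mono: "t \<le> t' \<Longrightarrow> x_star r i t s \<le> x_star r i t' s"
  by (auto simp: x_star_def)

lemma x_star_measurable [measurable]: "x_star r i t \<in> borel_measurable borel"
  unfolding x_star_def by measurable

lemma x_star_surplus_eq_max:
  fixes \<phi> :: "real \<Rightarrow> real"
  assumes "strict_mono_on {a..b} \<phi>"
    and "\<forall>u\<in>{a..b}. r < u \<longrightarrow> 0 < \<phi> u" "\<forall>u\<in>{a..b}. u < r \<longrightarrow> \<phi> u < 0"
    and "t \<in> {a..b}" "s \<in> {a..b}" "t \<noteq> s" "t \<noteq> r" "s \<noteq> r"
  shows "x_star r 1 t s * \<phi> t + x_star r 2 s t * \<phi> s = max 0 (max (\<phi> t) (\<phi> s))"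
proof -
  consider "s < t" | "t < s"
    using assms(6) by linarith
  then show ?thesis
  proof cases
    case 1
    then have "\<phi> s < \<phi> t"
      using assms(1,4,5) by (auto simp: strict_mono_on_def)
    moreover have "r < t \<and> 0 < \<phi> t \<or> t < r \<and> \<phi> t < 0"
      using assms(2,3,4,7) by (cases r t rule: linorder_cases) auto
    ultimately show ?thesis
      using 1 by (auto simp: x_star_def max_def)
  next
    case 2
    then have "\<phi> t < \<phi> s"
      using assms(1,4,5) by (auto simp: strict_mono_on_def)
    moreover have "r < s \<and> 0 < \<phi> s \<or> s < r \<and> \<phi> s < 0"
      using assms(2,3,5,8) by (cases r s rule: linorder_cases) auto
    ultimately show ?thesis
      using 2 by (auto simp: x_star_def max_def)
  qed
qed

locale interval_density = prob_space P
  for P :: "real measure" +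
  fixes a b :: real and f :: "real \<Rightarrow> real"
  assumes a_less_b: "a < b"
    and sets_P [measurable_cong]: "sets P = sets (restrict_space borel {a..b})"
    and atomless_P: "atomless P"
    and f_integrable: "set_integrable lborel {a..b} f"
    and f_pos: "\<forall>t\<in>{a..b}. 0 < f t"
    and cdf_eq: "\<forall>t\<in>{a..b}. measure P {a..t} = (LINT z:{a..t}|lborel. f z)"
begin

abbreviation \<phi> :: "real \<Rightarrow> real" where
  "\<phi> \<equiv> virtual_value (\<lambda>t. measure P {a..t}) f"

definition dens :: "real \<Rightarrow> real" where
  "dens x = indicator {a..b} x * f x"

lemma space_P: "space P = {a..b}"
  using sets_eq_imp_space_eq[OF sets_P] by simp

lemma sets_P_iff: "A \<in> sets P \<longleftrightarrow> A \<in> sets borel \<and> A \<subseteq> {a..b}"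
  by (auto simp: sets_P sets_restrict_space_iff)

lemma measurable_ident_P [measurable]: "(\<lambda>x. x) \<in> borel_measurable P"
  by (simp add: measurable_cong_sets[OF sets_P refl] measurable_restrict_space1)

lemma borel_measurable_P_iff:
  fixes h :: "real \<Rightarrow> real"
  shows "h \<in> borel_measurable P \<longleftrightarrow> (\<lambda>x. indicator {a..b} x * h x) \<in> borel_measurable borel"
  using borel_measurable_restrict_space_iff[of "{a..b}" borel h]
  by (simp add: measurable_cong_sets[OF sets_P refl])

lemma integrable_dens: "integrable lborel dens"
  using f_integrable unfolding set_integrable_def dens_def by simp

lemma dens_measurable [measurable]: "dens \<in> borel_measurable borel"
  using borel_measurable_integrable[OF integrable_dens] by simp

lemma dens_nonneg: "0 \<le> dens x"
  using f_pos by (auto simp: dens_def indicator_def less_imp_le)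

lemma measure_atMost_eq_integral:
  "measure P ({..t} \<inter> {a..b}) = (\<integral>x. indicator {..t} x * dens x \<partial>lborel)"
proof (cases "t < a")
  case True
  then have "(\<lambda>x. indicator {..t} x * dens x) = (\<lambda>x. 0)"
    by (auto simp: dens_def indicator_def)
  with True show ?thesis
    by simp
next
  case False
  then have "{..t} \<inter> {a..b} = {a..min t b}"
    by auto
  moreover have "indicator {..t} x * dens x = indicator {a..min t b} x * f x" for x
    by (simp add: dens_def indicator_def)
  ultimately show ?thesis
    using False cdf_eq a_less_b by (simp add: set_lebesgue_integral_def)
qed

text \<open>P lives on [a, b], so it is compared with the density measure on the real line through
  its push-forward under the identity.\<close>

lemma distr_eq_density: "distr P borel (\<lambda>x. x) = density lborel dens"
proof (rule cdf_unique)
  show "real_distribution (distr P borel (\<lambda>x. x))"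
    by (simp add: real_distribution_distr)
  have "integral\<^sup>L lborel dens = 1"
    using cdf_eq a_less_b prob_space space_P by (simp add: dens_def[abs_def] set_lebesgue_integral_def)
  then have "emeasure (density lborel dens) UNIV = 1"
    by (simp add: emeasure_density nn_integral_eq_integral[OF integrable_dens] dens_nonneg)
  then show "real_distribution (density lborel dens)"
    by (auto simp: real_distribution_def real_distribution_axioms_def intro!: prob_spaceI)
  show "cdf (distr P borel (\<lambda>x. x)) = cdf (density lborel dens)"
  proof
    fix t
    note measure_atMost_eq_integral[of t]
    moreover have "emeasure (density lborel dens) {..t} = (\<integral>x. indicator {..t} x * dens x \<partial>lborel)"
    proof -
      have "integrable lborel (\<lambda>x. dens x * indicator {..t} x)"
        by (simp add: integrable_real_mult_indicator integrable_dens)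
      then have "(\<integral>\<^sup>+x. ennreal (dens x * indicator {..t} x) \<partial>lborel)
          = (\<integral>x. dens x * indicator {..t} x \<partial>lborel)"
        by (simp add: nn_integral_eq_integral dens_nonneg)
      then show ?thesis
        by (simp add: emeasure_density ennreal_mult dens_nonneg ennreal_indicator mult.commute)
    qed
    moreover have "cdf (distr P borel (\<lambda>x. x)) t = measure P ({..t} \<inter> {a..b})"
      by (simp add: cdf_def measure_distr space_P)
    ultimately show "cdf (distr P borel (\<lambda>x. x)) t = cdf (density lborel dens) t"
      by (simp add: cdf_def measure_def integral_nonneg_AE dens_nonneg)
  qed
qed

lemma integral_eq_density:
  assumes "h \<in> borel_measurable P"
  shows "(\<integral>x. h x \<partial>P) = (\<integral>x. dens x * h x \<partial>lborel)"
    and "integrable P h \<longleftrightarrow> integrable lborel (\<lambda>x. dens x * h x)"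
proof -
  define h' where "h' x = indicator {a..b} x * h x" for x
  have [measurable]: "h' \<in> borel_measurable borel"
    using assms unfolding borel_measurable_P_iff h'_def[abs_def] .
  have on_P: "h x = h' x" if "x \<in> space P" for x
    using that by (simp add: h'_def space_P)
  have on_line: "dens x * h x = dens x * h' x" for x
    by (simp add: h'_def dens_def indicator_def)
  have "(\<integral>x. h x \<partial>P) = (\<integral>x. h' x \<partial>distr P borel (\<lambda>x. x))"
    using on_P by (simp add: integral_distr cong: Bochner_Integration.integral_cong)
  also have "\<dots> = (\<integral>x. dens x * h x \<partial>lborel)"
    by (simp add: distr_eq_density integral_density dens_nonneg on_line)
  finally show "(\<integral>x. h x \<partial>P) = (\<integral>x. dens x * h x \<partial>lborel)" .
  have "integrable P h \<longleftrightarrow> integrable (distr P borel (\<lambda>x. x)) h'"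
    using on_P by (simp add: integrable_distr_eq cong: Bochner_Integration.integrable_cong)
  also have "\<dots> \<longleftrightarrow> integrable lborel (\<lambda>x. dens x * h x)"
    by (simp add: distr_eq_density integrable_density dens_nonneg on_line)
  finally show "integrable P h \<longleftrightarrow> integrable lborel (\<lambda>x. dens x * h x)" .
qed

lemma null_sets_singleton: "c \<in> {a..b} \<Longrightarrow> {c} \<in> null_sets P"
  using atomless_measure_singleton[OF atomless_P, of c]
  by (simp add: null_sets_def sets_P_iff emeasure_eq_measure)

lemma AE_neq: "AE s in P. s \<noteq> c"
proof (cases "c \<in> {a..b}")
  case True
  then show ?thesis
    by (intro AE_I'[OF null_sets_singleton[OF True]]) auto
qed (auto intro!: AE_I2 simp: space_P)

lemma measure_upper_tail:
  assumes "z \<in> {a..b}"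
  shows "measure P {z..b} = 1 - measure P {a..z}"
proof -
  have "measure P {a..z} = measure P ({a..z} - {z})"
    using assms by (simp add: measure_Diff_null_set null_sets_singleton sets_P_iff)
  also have "{a..z} - {z} = {a..<z}"
    by auto
  finally have "measure P {a..z} = measure P {a..<z}" .
  moreover have "measure P ({a..<z} \<union> {z..b}) = measure P {a..<z} + measure P {z..b}"
    by (rule finite_measure_Union) (use assms in \<open>auto simp: sets_P_iff\<close>)
  moreover have "{a..<z} \<union> {z..b} = space P"
    using assms by (auto simp: space_P)
  ultimately show ?thesis
    using prob_space by simp
qed

lemma cdf_less_1:
  assumes "t \<in> {a..b}" "t < b"
  shows "measure P {a..t} < 1"
proof -
  have "{t<..b} \<notin> null_sets (density lborel dens)"
  proof (rule not_null_sets_density)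
    show "\<forall>x\<in>{t<..b}. 0 < ennreal (dens x)"
      using assms f_pos by (auto simp: dens_def)
  qed (use assms in auto)
  moreover have "{t<..b} \<inter> {a..b} = {t<..b}"
    using assms by auto
  ultimately have "measure P {t<..b} \<noteq> 0"
    using assms
    by (simp add: distr_eq_density[symmetric] null_sets_def emeasure_distr space_P
          emeasure_eq_measure sets_P_iff)
  moreover have "measure P ({a..t} \<union> {t<..b}) = measure P {a..t} + measure P {t<..b}"
    by (rule finite_measure_Union) (use assms in \<open>auto simp: sets_P_iff\<close>)
  moreover have "{a..t} \<union> {t<..b} = space P"
    using assms by (auto simp: space_P)
  ultimately show ?thesis
    using measure_nonneg[of P "{t<..b}"] prob_space by (simp add: less_le)
qed

lemma virtual_value_measurable [measurable]: "\<phi> \<in> borel_measurable P"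
proof -
  have "mono_on {a..b} (\<lambda>t. measure P {a..t})"
    by (intro mono_onI finite_measure_mono) (auto simp: sets_P_iff)
  then have [measurable]: "(\<lambda>t. measure P {a..t}) \<in> borel_measurable P"
    unfolding measurable_cong_sets[OF sets_P refl] by (rule borel_measurable_mono_on_fnc)
  have [measurable]: "f \<in> borel_measurable P"
    using dens_measurable unfolding borel_measurable_P_iff dens_def[abs_def] .
  show ?thesis
    unfolding virtual_value_def by measurable
qed

lemma integral_set_integral_upto:
  assumes [measurable]: "X \<in> borel_measurable P" and bound: "\<forall>t\<in>{a..b}. \<bar>X t\<bar> \<le> B"
  shows "integrable P (\<lambda>t. LINT z:{a..t}|lborel. X z)"
    and "set_integrable lborel {a..b} (\<lambda>z. X z * measure P {z..b})"
    and "(\<integral>t. (LINT z:{a..t}|lborel. X z) \<partial>P) = (LINT z:{a..b}|lborel. X z * measure P {z..b})"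
proof -
  interpret PL: pair_sigma_finite P lborel ..
  define X' where "X' z = indicator {a..b} z * X z" for z
  have [measurable]: "X' \<in> borel_measurable borel"
    using assms(1) unfolding borel_measurable_P_iff X'_def[abs_def] .
  define K where "K t z = (if a \<le> z \<and> z \<le> t then X' z else 0)" for t z
  have K_measurable: "case_prod K \<in> borel_measurable (P \<Otimes>\<^sub>M lborel)"
    unfolding K_def split_beta' by measurable
  have K_int: "integrable (P \<Otimes>\<^sub>M lborel) (case_prod K)"
  proof (rule Bochner_Integration.integrable_bound)
    have "emeasure (P \<Otimes>\<^sub>M lborel) ({a..b} \<times> {a..b}) = emeasure P {a..b} * emeasure lborel {a..b}"
      by (rule lborel.emeasure_pair_measure_Times) (auto simp: sets_P_iff)
    then have "emeasure (P \<Otimes>\<^sub>M lborel) ({a..b} \<times> {a..b}) < \<infinity>"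
      using a_less_b by (simp add: emeasure_eq_measure ennreal_mult_less_top)
    then show "integrable (P \<Otimes>\<^sub>M lborel) (\<lambda>w. \<bar>B\<bar> * indicator ({a..b} \<times> {a..b}) w)"
      by (intro integrable_mult_right integrable_real_indicator) (auto simp: sets_P_iff)
    show "AE w in P \<Otimes>\<^sub>M lborel. norm (case_prod K w) \<le> norm (\<bar>B\<bar> * indicator ({a..b} \<times> {a..b}) w)"
      using bound by (intro AE_I2) (force simp: K_def X'_def space_pair_measure space_P indicator_def)
  qed (rule K_measurable)
  have inner_lborel: "(\<integral>z. K t z \<partial>lborel) = (LINT z:{a..t}|lborel. X z)" if "t \<in> space P" for t
    using that unfolding set_lebesgue_integral_def
    by (intro Bochner_Integration.integral_cong) (auto simp: K_def X'_def indicator_def space_P)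
  have inner_P: "(\<integral>t. K t z \<partial>P) = indicator {a..b} z * (X z * measure P {z..b})" for z
  proof (cases "z \<in> {a..b}")
    case True
    then have "(\<integral>t. K t z \<partial>P) = (\<integral>t. X z * indicator {z..b} t \<partial>P)"
      by (intro Bochner_Integration.integral_cong) (auto simp: K_def X'_def indicator_def space_P)
    with True show ?thesis
      by (simp add: sets_P_iff emeasure_eq_measure)
  next
    case False
    then have "K t z = 0" for t
      by (simp add: K_def X'_def)
    with False show ?thesis
      by simp
  qed
  show "integrable P (\<lambda>t. LINT z:{a..t}|lborel. X z)"
    using PL.integrable_fst[OF K_int] inner_lborel
    by (simp cong: Bochner_Integration.integrable_cong)
  show "set_integrable lborel {a..b} (\<lambda>z. X z * measure P {z..b})"
    using PL.integrable_snd[OF K_int] inner_P by (simp add: set_integrable_def)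
  have "(\<integral>t. (LINT z:{a..t}|lborel. X z) \<partial>P) = (\<integral>t. (\<integral>z. K t z \<partial>lborel) \<partial>P)"
    using inner_lborel by (simp cong: Bochner_Integration.integral_cong)
  also have "\<dots> = (\<integral>z. (\<integral>t. K t z \<partial>P) \<partial>lborel)"
    using PL.integral_fst[OF K_int] PL.integral_snd[OF K_int] by simp
  finally show "(\<integral>t. (LINT z:{a..t}|lborel. X z) \<partial>P) = (LINT z:{a..b}|lborel. X z * measure P {z..b})"
    by (simp add: inner_P set_lebesgue_integral_def)
qed

lemma expected_payment_eq_virtual_value:
  assumes [measurable]: "X \<in> borel_measurable P" and bound: "\<forall>t\<in>{a..b}. \<bar>X t\<bar> \<le> B"
  shows "integrable P (\<lambda>t. X t * \<phi> t)"
    and "(\<integral>t. t * X t - (LINT z:{a..t}|lborel. X z) \<partial>P) = (\<integral>t. X t * \<phi> t \<partial>P)"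
proof -
  note upto = integral_set_integral_upto[OF assms]
  have payment_int: "integrable P (\<lambda>t. t * X t)"
  proof (rule integrable_const_bound[where B="(\<bar>a\<bar> + \<bar>b\<bar>) * B"])
    show "AE t in P. norm (t * X t) \<le> (\<bar>a\<bar> + \<bar>b\<bar>) * B"
      using bound by (intro AE_I2) (auto simp: space_P abs_mult intro!: mult_mono)
  qed simp
  then have int_first: "integrable lborel (\<lambda>t. dens t * (t * X t))"
    using integral_eq_density(2)[of "\<lambda>t. t * X t"] by simp
  have int_rent: "integrable lborel (\<lambda>t. indicator {a..b} t * (X t * measure P {t..b}))"
    using upto(2) by (simp add: set_integrable_def)
  have pointwise: "dens t * (t * X t) - indicator {a..b} t * (X t * measure P {t..b})
      = dens t * (X t * \<phi> t)" for t
  proof (cases "t \<in> {a..b}")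
    case True
    then have "f t \<noteq> 0"
      using f_pos by force
    with True show ?thesis
      by (simp add: dens_def measure_upper_tail virtual_value_def field_simps)
  qed (simp add: dens_def)
  show "integrable P (\<lambda>t. X t * \<phi> t)"
    using Bochner_Integration.integrable_diff[OF int_first int_rent]
    by (simp add: integral_eq_density(2) pointwise)
  have "(\<integral>t. t * X t - (LINT z:{a..t}|lborel. X z) \<partial>P)
      = (\<integral>t. dens t * (t * X t) \<partial>lborel) - (LINT z:{a..b}|lborel. X z * measure P {z..b})"
    using payment_int upto(1) by (simp add: integral_eq_density(1) upto(3))
  also have "\<dots> = (\<integral>t. dens t * (X t * \<phi> t) \<partial>lborel)"
    using int_first int_rent by (simp add: set_lebesgue_integral_def pointwise[symmetric])
  also have "\<dots> = (\<integral>t. X t * \<phi> t \<partial>P)"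
    by (simp add: integral_eq_density(1))
  finally show "(\<integral>t. t * X t - (LINT z:{a..t}|lborel. X z) \<partial>P) = (\<integral>t. X t * \<phi> t \<partial>P)" .
qed

lemma integrable_virtual_value: "integrable P \<phi>"
  using expected_payment_eq_virtual_value(1)[of "\<lambda>_. 1" 1] by simp

definition virtual_surplus :: "(nat \<Rightarrow> real \<Rightarrow> real \<Rightarrow> real) \<Rightarrow> real \<times> real \<Rightarrow> real" where
  "virtual_surplus x = (\<lambda>(t, s). x 1 t s * \<phi> t + x 2 s t * \<phi> s)"

lemma revenue_eq_integral_virtual_surplus:
  assumes "allocation_rule a b x"
  shows "integrable (P \<Otimes>\<^sub>M P) (virtual_surplus x)"
    and "revenue a P x = (\<integral>w. virtual_surplus x w \<partial>(P \<Otimes>\<^sub>M P))"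
proof -
  interpret PP: pair_prob_space P P ..
  have bidder: "integrable (P \<Otimes>\<^sub>M P) (\<lambda>(t, s). x i t s * \<phi> t)
      \<and> (\<integral>t. t * interim P x i t - (LINT z:{a..t}|lborel. interim P x i z) \<partial>P)
        = (\<integral>(t, s). x i t s * \<phi> t \<partial>(P \<Otimes>\<^sub>M P))" if "i \<in> {1, 2}" for i
  proof -
    have "case_prod (x i) \<in> borel_measurable (restrict_space borel {a..b} \<Otimes>\<^sub>M restrict_space borel {a..b})
        \<and> (\<exists>B. \<forall>t\<in>{a..b}. \<forall>s\<in>{a..b}. \<bar>x i t s\<bar> \<le> B)"
      using assms that unfolding allocation_rule_def by blast
    then obtain B where [measurable]: "case_prod (x i) \<in> borel_measurable (P \<Otimes>\<^sub>M P)"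
      and B: "\<forall>t\<in>space P. \<forall>s\<in>space P. \<bar>x i t s\<bar> \<le> B"
      by (auto simp: space_P measurable_cong_sets[OF sets_pair_measure_cong[OF sets_P sets_P] refl])
    note interim = integral_bounded_kernel[OF prob_space_axioms _ B, folded interim_def]
    have "(\<integral>t. t * interim P x i t - (LINT z:{a..t}|lborel. interim P x i z) \<partial>P)
        = (\<integral>t. interim P x i t * \<phi> t \<partial>P)"
      using interim by (intro expected_payment_eq_virtual_value(2)) (auto simp: space_P)
    also have "\<dots> = (\<integral>(t, s). x i t s * \<phi> t \<partial>(P \<Otimes>\<^sub>M P))"
      unfolding interim_def
      by (rule integral_kernel_times(2)[OF prob_space_axioms _ B integrable_virtual_value]) simp
    finally show ?thesis
      using integral_kernel_times(1)[OF prob_space_axioms _ B integrable_virtual_value] by simp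
  qed
  have swap: "(\<integral>(t, s). x 2 t s * \<phi> t \<partial>(P \<Otimes>\<^sub>M P))
      = (\<integral>(t, s). x 2 s t * \<phi> s \<partial>(P \<Otimes>\<^sub>M P))"
    and swap_int: "integrable (P \<Otimes>\<^sub>M P) (\<lambda>(t, s). x 2 s t * \<phi> s)"
    using bidder[of 2] PP.integral_product_swap[of "\<lambda>(t, s). x 2 t s * \<phi> t"]
      PP.integrable_product_swap_iff[of "\<lambda>(t, s). x 2 t s * \<phi> t"]
    by (auto simp: borel_measurable_integrable)
  show "integrable (P \<Otimes>\<^sub>M P) (virtual_surplus x)"
    using bidder[of 1] swap_int by (simp add: virtual_surplus_def split_beta')
  show "revenue a P x = (\<integral>w. virtual_surplus x w \<partial>(P \<Otimes>\<^sub>M P))"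
    using bidder[of 1] bidder[of 2] swap swap_int
    by (simp add: revenue_def virtual_surplus_def split_beta')
qed

lemma integrable_max_virtual_value:
  "integrable (P \<Otimes>\<^sub>M P) (\<lambda>(t, s). max 0 (max (\<phi> t) (\<phi> s)))"
proof -
  interpret PP: pair_prob_space P P ..
  have first: "integrable (P \<Otimes>\<^sub>M P) (\<lambda>(t, s). \<phi> t)"
    using integral_kernel_times(1)[OF prob_space_axioms _ _ integrable_virtual_value, of "\<lambda>_ _. 1" 1]
    by simp
  moreover have "integrable (P \<Otimes>\<^sub>M P) (\<lambda>(t, s). \<phi> s)"
    using first PP.integrable_product_swap_iff[of "\<lambda>(t, s). \<phi> t"] by simp
  ultimately have "integrable (P \<Otimes>\<^sub>M P) (\<lambda>(t, s). \<bar>\<phi> t\<bar> + \<bar>\<phi> s\<bar>)"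
    by (simp add: split_beta')
  then show ?thesis
    by (rule Bochner_Integration.integrable_bound) (auto simp: split_beta' intro!: AE_I2)
qed

lemma revenue_le_max_virtual_value:
  assumes "allocation_rule a b x"
  shows "revenue a P x \<le> (\<integral>(t, s). max 0 (max (\<phi> t) (\<phi> s)) \<partial>(P \<Otimes>\<^sub>M P))"
  unfolding revenue_eq_integral_virtual_surplus(2)[OF assms]
proof (rule integral_mono[OF revenue_eq_integral_virtual_surplus(1)[OF assms] integrable_max_virtual_value])
  fix w assume "w \<in> space (P \<Otimes>\<^sub>M P)"
  then show "virtual_surplus x w \<le> (\<lambda>(t, s). max 0 (max (\<phi> t) (\<phi> s))) w"
    using assms unfolding allocation_rule_def
    by (auto simp: virtual_surplus_def space_pair_measure space_P intro!: convex_combination_le_max)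
qed

lemma revenue_x_star:
  assumes "strict_mono_on {a..b} \<phi>"
  shows "revenue a P (x_star (reserve a b (\<lambda>t. measure P {a..t}) f))
    = (\<integral>(t, s). max 0 (max (\<phi> t) (\<phi> s)) \<partial>(P \<Otimes>\<^sub>M P))"
proof -
  interpret PP: pair_prob_space P P ..
  let ?r = "reserve a b (\<lambda>t. measure P {a..t}) f"
  have "AE w in P \<Otimes>\<^sub>M P. fst w \<noteq> snd w \<and> fst w \<noteq> ?r \<and> snd w \<noteq> ?r"
  proof (rule PP.AE_pair_measure)
    show "AE t in P. AE s in P. fst (t, s) \<noteq> snd (t, s) \<and> fst (t, s) \<noteq> ?r \<and> snd (t, s) \<noteq> ?r"
      using AE_neq[of ?r]
    proof eventually_elim
      case (elim t)
      show ?case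
        using AE_neq[of t] AE_neq[of ?r] by eventually_elim (use elim in auto)
    qed
  qed measurable
  then have "AE w in P \<Otimes>\<^sub>M P.
      virtual_surplus (x_star ?r) w = (\<lambda>(t, s). max 0 (max (\<phi> t) (\<phi> s))) w"
  proof (rule AE_mp, intro AE_I2 impI)
    have sign: "\<forall>u\<in>{a..b}. ?r < u \<longrightarrow> 0 < \<phi> u" "\<forall>u\<in>{a..b}. u < ?r \<longrightarrow> \<phi> u < 0"
      using virtual_value_pos_above_reserve virtual_value_neg_below_reserve[OF assms] by blast+
    fix w assume w: "w \<in> space (P \<Otimes>\<^sub>M P)" "fst w \<noteq> snd w \<and> fst w \<noteq> ?r \<and> snd w \<noteq> ?r"
    obtain t s where ts: "w = (t, s)"
      by force
    show "virtual_surplus (x_star ?r) w = (\<lambda>(t, s). max 0 (max (\<phi> t) (\<phi> s))) w"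
      using w x_star_surplus_eq_max[OF assms sign, of t s]
      by (simp add: ts virtual_surplus_def space_pair_measure space_P)
  qed
  then have "(\<integral>w. virtual_surplus (x_star ?r) w \<partial>(P \<Otimes>\<^sub>M P))
      = (\<integral>(t, s). max 0 (max (\<phi> t) (\<phi> s)) \<partial>(P \<Otimes>\<^sub>M P))"
    using revenue_eq_integral_virtual_surplus(1)[OF allocation_rule_x_star] integrable_max_virtual_value
    by (intro integral_cong_AE) (simp_all add: borel_measurable_integrable)
  then show ?thesis
    by (simp add: revenue_eq_integral_virtual_surplus(2)[OF allocation_rule_x_star])
qed

lemma assumption_X_x_star: "assumption_X a b P \<eta> (x_star r)"
proof -
  have zero_one: "x_star r i t t' \<in> {0, 1}" if "t' \<noteq> t" for i t t'
    using that by (auto simp: x_star_def)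
  have integrable: "integrable P (x_star r i t)" for i t
    by (intro integrable_const_bound[where B=1]) (auto simp: x_star_def)
  have full: "t = b" if t: "t \<in> {a..b}" and "interim P (x_star r) i t = 1" for i t
  proof (rule ccontr)
    assume "t \<noteq> b"
    with t have "t < b"
      by simp
    have "integrable P (indicator {a..t} :: real \<Rightarrow> real)"
      using t by (intro integrable_real_indicator) (auto simp: sets_P_iff emeasure_eq_measure)
    then have "interim P (x_star r) i t \<le> (\<integral>s. indicator {a..t} s \<partial>P)"
      unfolding interim_def
    proof (rule integral_mono[OF integrable])
      show "x_star r i t s \<le> indicator {a..t} s" if "s \<in> space P" for s
        using that by (auto simp: x_star_def indicator_def space_P)
    qed
    also have "\<dots> < 1"
      using t \<open>t < b\<close> cdf_less_1 by (simp add: sets_P_iff)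
    finally show False
      using that(2) by simp
  qed
  have "mono_on {a..b} (interim_min P \<eta> (x_star r) i)" for i
  proof (rule mono_onI)
    fix t t' :: real assume "t \<le> t'"
    then have "\<forall>s\<in>space P. 0 \<le> x_star r i t s \<and> x_star r i t s \<le> x_star r i t' s \<and> x_star r i t' s \<le> 1"
      using x_star_mono[of t t' r i] by (auto simp: x_star_def)
    then show "interim_min P \<eta> (x_star r) i t \<le> interim_min P \<eta> (x_star r) i t'"
      by (rule interim_min_mono[rotated 2]) measurable
  qed
  with zero_one full show ?thesis
    unfolding assumption_X_def by blast
qed

end

theorem proposition5:
  fixes a b \<eta> :: real and P :: "real measure" and f :: "real \<Rightarrow> real"
  assumes "0 < a" and "a < b"
    and "sets P = sets (restrict_space borel {a..b})"
    and "prob_space P"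
    and "atomless P"
    and "0 < \<eta>" and "\<eta> < 1"
    and "set_integrable lborel {a..b} f"
    and "\<forall>t\<in>{a..b}. 0 < f t"
    and "\<forall>t\<in>{a..b}. measure P {a..t} = (LINT z:{a..t}|lborel. f z)"
    and "strict_mono_on {a..b} (virtual_value (\<lambda>t. measure P {a..t}) f)"
  shows "allocation_rule a b (x_star (reserve a b (\<lambda>t. measure P {a..t}) f))
       \<and> assumption_X a b P \<eta> (x_star (reserve a b (\<lambda>t. measure P {a..t}) f))
       \<and> (\<forall>x. allocation_rule a b x \<and> assumption_X a b P \<eta> x \<longrightarrow>
              revenue a P x \<le> revenue a P (x_star (reserve a b (\<lambda>t. measure P {a..t}) f)))"
proof -
  interpret interval_density P a b f
    using assms(4) interval_density_axioms.intro[OF assms(2,3,5,8,9,10)]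
    by (rule interval_density.intro)
  have "revenue a P x \<le> revenue a P (x_star (reserve a b (\<lambda>t. measure P {a..t}) f))"
    if "allocation_rule a b x" for x
    unfolding revenue_x_star[OF assms(11)] by (rule revenue_le_max_virtual_value[OF that])
  then show ?thesis
    using allocation_rule_x_star assumption_X_x_star by blast
qed

end
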